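(* Let $M$ be a real symmetric $n \times n$ matrix whose diagonal entries are all $0$ and whose off-diagonal entries each lie in $\{0, 1, -1\}$. Let $e$ be an eigenvalue of $M$ of multiplicity at least $m$, where $m \ge 1$. Then $e^2 \le (n-1)(n-m)/m$. *)

theory Defs
  imports "Jordan_Normal_Form.Char_Poly"
begin

end

theory Submission
  imports Defs "Jordan_Normal_Form.Schur_Decomposition"
begin

text \<open>
  The eigenvalues \<open>r\<^sub>1, \<dots>, r\<^sub>n\<close> of a real symmetric matrix are real, and
  Schur triangularisation identifies their power sums with traces:
  \<open>\<Sum> r\<^sub>i = tr M = 0\<close> and \<open>\<Sum> r\<^sub>i\<^sup>2 = tr M\<^sup>2 = \<Sum> M\<^sub>i\<^sub>j\<^sup>2 \<le> n(n - 1)\<close>.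
  If \<open>e\<close> occurs \<open>k \<ge> m\<close> times, the other \<open>n - k\<close> eigenvalues sum to \<open>-k e\<close>, so
  Cauchy-Schwarz gives \<open>k\<^sup>2 e\<^sup>2 \<le> (n - k) (\<Sum> r\<^sub>i\<^sup>2 - k e\<^sup>2)\<close>, i.e.
  \<open>k n e\<^sup>2 \<le> (n - k) \<Sum> r\<^sub>i\<^sup>2\<close>; the bound is decreasing in \<open>k\<close>.
\<close>

hide_const (open) Coset.order

lemma order_prod_list_linear:
  fixes es :: "'a::idom list"
  shows "order a (\<Prod>e\<leftarrow>es. [:- e, 1:]) = count_list es a"
proof (induction es)
  case Nil
  then show ?case by (simp add: order_0I)
next
  case (Cons e es)
  have "(\<Prod>e\<leftarrow>es. [:- e, 1:]) \<noteq> 0"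
    unfolding prod_list_zero_iff by auto
  then have "order a (\<Prod>e\<leftarrow>e # es. [:- e, 1:])
      = order a [:- e, 1:] + order a (\<Prod>e\<leftarrow>es. [:- e, 1:])"
    by (simp add: order_mult del: mult_pCons_left)
  moreover have "order a [:- e, 1:] = (if e = a then 1 else 0)"
    using order_power_n_n[of a 1] by (auto simp: order_0I)
  ultimately show ?case using Cons.IH by simp
qed

lemma conjugate_mult_mat_vec:
  fixes A :: "'a::conjugatable_ring mat"
  assumes A: "A \<in> carrier_mat n m" and v: "v \<in> carrier_vec m"
  shows "conjugate (A *\<^sub>v v) = map_mat conjugate A *\<^sub>v conjugate v"
proof (rule eq_vecI)
  fix i assume "i < dim_vec (map_mat conjugate A *\<^sub>v conjugate v)"
  then have i: "i < n" using A by simp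
  have "row (map_mat conjugate A) i = conjugate (row A i)"
    using A i by (intro eq_vecI) auto
  then show "conjugate (A *\<^sub>v v) $ i = (map_mat conjugate A *\<^sub>v conjugate v) $ i"
    using A v i conjugate_sprod_vec[of "row A i" m v] by simp
qed (use A in simp)

lemma hermitian_eigenvalue_conjugate:
  fixes A :: "'a::conjugatable_ordered_field mat"
  assumes A: "A \<in> carrier_mat n n" and herm: "transpose_mat A = map_mat conjugate A"
    and "eigenvalue A a"
  shows "conjugate a = a"
proof -
  obtain v where v: "v \<in> carrier_vec n" "v \<noteq> 0\<^sub>v n" "A *\<^sub>v v = a \<cdot>\<^sub>v v"
    using assms unfolding eigenvalue_def eigenvector_def by auto
  have "a * (v \<bullet>c v) = (A *\<^sub>v v) \<bullet>c v"
    using v by simp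
  also have "\<dots> = v \<bullet> (transpose_mat A *\<^sub>v conjugate v)"
    using transpose_vec_mult_scalar[of "transpose_mat A" n n "conjugate v" v] A v by simp
  also have "\<dots> = v \<bullet> conjugate (A *\<^sub>v v)"
    unfolding herm conjugate_mult_mat_vec[OF A v(1)] ..
  also have "\<dots> = conjugate a * (v \<bullet>c v)"
    using v by (simp add: conjugate_smult_vec)
  finally have "(a - conjugate a) * (v \<bullet>c v) = 0"
    by (simp add: algebra_simps)
  moreover have "v \<bullet>c v \<noteq> 0"
    using v by simp
  ultimately show ?thesis by simp
qed

lemma real_symmetric_char_poly_factorized:
  fixes M :: "real mat"
  assumes M: "M \<in> carrier_mat n n" and sym: "transpose_mat M = M"
  obtains rs where "length rs = n" "char_poly M = (\<Prod>r\<leftarrow>rs. [:- r, 1:])"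
proof -
  let ?A = "map_mat complex_of_real M"
  have A: "?A \<in> carrier_mat n n" using M by simp
  obtain as where as: "char_poly ?A = (\<Prod>a\<leftarrow>as. [:- a, 1:])" "length as = n"
    using char_poly_factorized[OF A] by blast
  have herm: "transpose_mat ?A = map_mat conjugate ?A"
    using M by (subst sym[symmetric]) (auto intro!: eq_matI)
  have "a \<in> \<real>" if "a \<in> set as" for a
  proof -
    have "poly (char_poly ?A) a = 0"
      unfolding as(1) using that by (simp add: poly_prod_list prod_list_zero_iff)
    then have "conjugate a = a"
      using hermitian_eigenvalue_conjugate[OF A herm] eigenvalue_root_char_poly[OF A] by blast
    then show ?thesis by (simp add: Reals_cnj_iff)
  qed
  then have as_rs: "as = map complex_of_real (map Re as)"
    by (auto intro!: map_idI[symmetric] simp: Reals_def)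
  interpret of_real_poly: map_poly_inj_idom_hom complex_of_real ..
  have "map_poly complex_of_real (char_poly M)
      = map_poly complex_of_real (\<Prod>r\<leftarrow>map Re as. [:- r, 1:])"
    unfolding of_real_hom.char_poly_hom[OF M, symmetric] as(1)
    by (subst as_rs) (simp add: of_real_poly.hom_prod_list o_def hom_distribs)
  then have "char_poly M = (\<Prod>r\<leftarrow>map Re as. [:- r, 1:])"
    by (rule of_real_poly.injectivity)
  with as(2) show ?thesis using that[of "map Re as"] by simp
qed

definition mat_trace :: "'a::comm_semiring_0 mat \<Rightarrow> 'a" where
  "mat_trace A = (\<Sum>i<dim_row A. A $$ (i, i))"

lemma mat_trace_diag_mat: "mat_trace A = sum_list (diag_mat A)"
  by (simp add: mat_trace_def diag_mat_def sum_list_sum_nth atLeast0LessThan)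

lemma mat_trace_mult_comm:
  assumes "A \<in> carrier_mat n m" "B \<in> carrier_mat m n"
  shows "mat_trace (A * B) = mat_trace (B * A)"
proof -
  have "mat_trace (A * B) = (\<Sum>i<n. \<Sum>j<m. A $$ (i, j) * B $$ (j, i))"
    using assms by (auto simp: mat_trace_def scalar_prod_def atLeast0LessThan intro!: sum.cong)
  also have "\<dots> = (\<Sum>j<m. \<Sum>i<n. B $$ (j, i) * A $$ (i, j))"
    by (subst sum.swap) (simp add: mult.commute)
  also have "\<dots> = mat_trace (B * A)"
    using assms by (auto simp: mat_trace_def scalar_prod_def atLeast0LessThan intro!: sum.cong)
  finally show ?thesis .
qed

lemma mat_trace_similar_mat_wit:
  assumes "similar_mat_wit A B P Q"
  shows "mat_trace A = mat_trace B"
proof -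
  note wit = similar_mat_witD[OF refl assms]
  have "mat_trace A = mat_trace (Q * (P * B))"
    using wit by (metis mat_trace_mult_comm mult_carrier_mat)
  also have "Q * (P * B) = B"
    using wit by (metis assoc_mult_mat left_mult_one_mat)
  finally show ?thesis .
qed

lemma upper_triangular_mult:
  assumes A: "A \<in> carrier_mat n n" and B: "B \<in> carrier_mat n n"
    and utA: "upper_triangular A" and utB: "upper_triangular B"
  shows "upper_triangular (A * B)"
proof (rule upper_triangularI)
  fix i j assume "j < i" "i < dim_row (A * B)"
  then have i: "i < n" using A by simp
  have "A $$ (i, k) * B $$ (k, j) = 0" if "k < n" for k
  proof (cases "k < i")
    case True
    then show ?thesis using upper_triangularD[OF utA True] A i by simp
  next
    case False
    then show ?thesis using upper_triangularD[OF utB, of j k] \<open>j < i\<close> B that by simp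
  qed
  then show "(A * B) $$ (i, j) = 0"
    using A B i \<open>j < i\<close> by (simp add: scalar_prod_def)
qed

lemma upper_triangular_mult_diag:
  assumes A: "A \<in> carrier_mat n n" and B: "B \<in> carrier_mat n n"
    and utA: "upper_triangular A" and utB: "upper_triangular B" and i: "i < n"
  shows "(A * B) $$ (i, i) = A $$ (i, i) * B $$ (i, i)"
proof -
  have "A $$ (i, k) * B $$ (k, i) = (if k = i then A $$ (i, i) * B $$ (i, i) else 0)"
    if "k < n" for k
  proof (cases k i rule: linorder_cases)
    case less
    then show ?thesis using upper_triangularD[OF utA less] A i by simp
  next
    case greater
    then show ?thesis using upper_triangularD[OF utB greater] B that by simp
  qed simp
  then have "(\<Sum>k = 0..<n. A $$ (i, k) * B $$ (k, i))
      = (\<Sum>k = 0..<n. if k = i then A $$ (i, i) * B $$ (i, i) else 0)"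
    by (intro sum.cong) auto
  then show ?thesis using A B i by (simp add: scalar_prod_def)
qed

lemma upper_triangular_pow_mat:
  assumes A: "A \<in> carrier_mat n n" and ut: "upper_triangular A"
  shows "upper_triangular (A ^\<^sub>m k)"
proof (induction k)
  case (Suc k)
  then show ?case using upper_triangular_mult[OF _ A _ ut, of "A ^\<^sub>m k"] A by simp
qed simp

lemma diag_mat_pow_mat_upper_triangular:
  assumes A: "A \<in> carrier_mat n n" and ut: "upper_triangular A"
  shows "diag_mat (A ^\<^sub>m k) = map (\<lambda>x. x ^ k) (diag_mat A)"
proof (induction k)
  case 0
  then show ?case using A by (simp add: map_replicate_const) (simp add: diag_mat_def)
next
  case (Suc k)
  have "(A ^\<^sub>m k * A) $$ (i, i) = (A ^\<^sub>m k) $$ (i, i) * A $$ (i, i)" if "i < n" for i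
    using upper_triangular_mult_diag[OF _ A upper_triangular_pow_mat[OF A ut] ut that] A by simp
  with Suc A show ?case by (simp add: diag_mat_def power_commutes)
qed

lemma mat_trace_pow_mat_char_poly:
  fixes A :: "'a::conjugatable_ordered_field mat"
  assumes A: "A \<in> carrier_mat n n" and cp: "char_poly A = (\<Prod>e\<leftarrow>es. [:- e, 1:])"
  shows "mat_trace (A ^\<^sub>m k) = sum_list (map (\<lambda>e. e ^ k) es)"
proof -
  obtain B P Q where "schur_decomposition A es = (B, P, Q)"
    by (cases "schur_decomposition A es") auto
  from schur_decomposition[OF A cp this]
  have wit: "similar_mat_wit A B P Q" and ut: "upper_triangular B" and "diag_mat B = es" by auto
  have B: "B \<in> carrier_mat n n" using similar_mat_witD2[OF A wit] by auto
  have "mat_trace (A ^\<^sub>m k) = mat_trace (B ^\<^sub>m k)"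
    by (rule mat_trace_similar_mat_wit[OF similar_mat_wit_pow[OF wit]])
  also have "\<dots> = sum_list (map (\<lambda>e. e ^ k) es)"
    unfolding mat_trace_diag_mat diag_mat_pow_mat_upper_triangular[OF B ut] \<open>diag_mat B = es\<close> ..
  finally show ?thesis .
qed

lemma mat_trace_square_symmetric:
  fixes A :: "'a::comm_semiring_1 mat"
  assumes A: "A \<in> carrier_mat n n" and sym: "transpose_mat A = A"
  shows "mat_trace (A ^\<^sub>m 2) = (\<Sum>i<n. \<Sum>j<n. (A $$ (i, j))\<^sup>2)"
proof -
  have "A $$ (j, i) = A $$ (i, j)" if "i < n" "j < n" for i j
    using A that by (subst sym[symmetric]) simp
  then show ?thesis
    using A by (auto simp: mat_trace_def numeral_2_eq_2 scalar_prod_def power2_eq_square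
        atLeast0LessThan intro!: sum.cong)
qed

lemma symmetric_mat_trace_square_le:
  fixes M :: "real mat"
  assumes M: "M \<in> carrier_mat n n" and sym: "transpose_mat M = M"
    and diag: "\<And>i. i < n \<Longrightarrow> M $$ (i, i) = 0"
    and bound: "\<And>i j. i < n \<Longrightarrow> j < n \<Longrightarrow> i \<noteq> j \<Longrightarrow> \<bar>M $$ (i, j)\<bar> \<le> 1"
  shows "mat_trace (M ^\<^sub>m 2) \<le> real n * (real n - 1)"
proof -
  have "(\<Sum>j<n. (M $$ (i, j))\<^sup>2) \<le> real n - 1" if i: "i < n" for i
  proof -
    have "(\<Sum>j<n. (M $$ (i, j))\<^sup>2) = (\<Sum>j \<in> {..<n} - {i}. (M $$ (i, j))\<^sup>2)"
      using i diag by (subst sum.remove[of _ i]) auto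
    also have "\<dots> \<le> (\<Sum>j \<in> {..<n} - {i}. 1)"
      using i bound by (intro sum_mono) (simp add: abs_square_le_1)
    also have "\<dots> = real n - 1"
      using i by simp
    finally show ?thesis .
  qed
  then have "(\<Sum>i<n. \<Sum>j<n. (M $$ (i, j))\<^sup>2) \<le> (\<Sum>i<n. real n - 1)"
    by (intro sum_mono) simp
  then show ?thesis
    unfolding mat_trace_square_symmetric[OF M sym] by simp
qed

lemma sum_list_map_count_list:
  fixes f :: "'a \<Rightarrow> 'b::comm_semiring_1"
  shows "sum_list (map f xs)
    = of_nat (count_list xs a) * f a + sum_list (map f (filter (\<lambda>x. x \<noteq> a) xs))"
  by (induction xs) (auto simp: algebra_simps)

lemma length_count_list_filter: "length xs = count_list xs a + length (filter (\<lambda>x. x \<noteq> a) xs)"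
  by (induction xs) auto

lemma sum_list_squared_le_sum_of_squares:
  fixes xs :: "real list"
  shows "(sum_list xs)\<^sup>2 \<le> real (length xs) * sum_list (map (\<lambda>x. x\<^sup>2) xs)"
proof (cases "xs = []")
  case False
  define L where "L = real (length xs)"
  define c where "c = sum_list xs / L"
  have L: "L > 0" using False by (simp add: L_def)
  have "0 \<le> sum_list (map (\<lambda>x. (x - c)\<^sup>2) xs)"
    by (intro sum_list_nonneg) auto
  also have "\<dots> = sum_list (map (\<lambda>x. x\<^sup>2) xs) - 2 * c * sum_list xs + L * c\<^sup>2"
    unfolding L_def by (induction xs) (simp_all add: algebra_simps power2_eq_square)
  also have "\<dots> = sum_list (map (\<lambda>x. x\<^sup>2) xs) - (sum_list xs)\<^sup>2 / L"
    using L by (simp add: c_def field_simps power2_eq_square)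
  finally have "(sum_list xs)\<^sup>2 / L \<le> sum_list (map (\<lambda>x. x\<^sup>2) xs)"
    by simp
  then show ?thesis using L by (simp add: L_def field_simps)
qed simp

lemma sum_list_eq_0_count_list_bound:
  fixes xs :: "real list"
  assumes sum0: "sum_list xs = 0" and m: "1 \<le> m" "m \<le> count_list xs a"
  shows "real m * real (length xs) * a\<^sup>2
    \<le> (real (length xs) - real m) * sum_list (map (\<lambda>x. x\<^sup>2) xs)"
proof -
  define ys where "ys = filter (\<lambda>x. x \<noteq> a) xs"
  define k where "k = real (count_list xs a)"
  define N where "N = real (length xs)"
  define Q where "Q = sum_list (map (\<lambda>x. x\<^sup>2) xs)"
  have N: "N = k + real (length ys)"
    unfolding N_def k_def ys_def using length_count_list_filter[of xs a] by simp
  have "sum_list ys = - k * a"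
    using sum0 sum_list_map_count_list[of id xs a] unfolding k_def ys_def by simp
  moreover have "sum_list (map (\<lambda>x. x\<^sup>2) ys) = Q - k * a\<^sup>2"
    using sum_list_map_count_list[of "\<lambda>x. x\<^sup>2" xs a] unfolding k_def ys_def Q_def by simp
  ultimately have "(k * a)\<^sup>2 \<le> (N - k) * (Q - k * a\<^sup>2)"
    using sum_list_squared_le_sum_of_squares[of ys] N by simp
  then have key: "k * (N * a\<^sup>2) \<le> (N - k) * Q"
    using N by (simp add: algebra_simps power2_eq_square)
  have km: "real m \<le> k" "1 \<le> real m"
    using m by (simp_all add: k_def)
  have "Q \<ge> 0" unfolding Q_def by (intro sum_list_nonneg) auto
  have "k * (real m * N * a\<^sup>2) = real m * (k * (N * a\<^sup>2))" by simp
  also have "\<dots> \<le> real m * ((N - k) * Q)"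
    using key km by (simp add: mult_left_mono)
  also have "\<dots> \<le> k * ((N - real m) * Q)"
  proof -
    have "k * ((N - real m) * Q) - real m * ((N - k) * Q) = N * (k - real m) * Q"
      by (simp add: algebra_simps)
    moreover have "N * (k - real m) * Q \<ge> 0"
      using km \<open>Q \<ge> 0\<close> by (simp add: N_def)
    ultimately show ?thesis by linarith
  qed
  finally show ?thesis
    using km unfolding N_def Q_def by simp
qed

theorem lemma2p3:
  fixes M :: "real mat" and n m :: nat and e :: real
  assumes "M \<in> carrier_mat n n"
    and "transpose_mat M = M"
    and "\<And>i. i < n \<Longrightarrow> M $$ (i, i) = 0"
    and "\<And>i j. i < n \<Longrightarrow> j < n \<Longrightarrow> i \<noteq> j \<Longrightarrow> M $$ (i, j) \<in> {0, 1, -1}"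
    and "m \<ge> 1"
    and "order e (char_poly M) \<ge> m"
  shows "e ^ 2 \<le> (real n - 1) * (real n - real m) / real m"
proof -
  obtain rs where len: "length rs = n" and cp: "char_poly M = (\<Prod>r\<leftarrow>rs. [:- r, 1:])"
    using real_symmetric_char_poly_factorized[OF assms(1,2)] .
  have sum0: "sum_list rs = 0"
    using mat_trace_pow_mat_char_poly[OF assms(1) cp, of 1] assms(1,3) by (simp add: mat_trace_def)
  have "sum_list (map (\<lambda>r. r\<^sup>2) rs) = mat_trace (M ^\<^sub>m 2)"
    using mat_trace_pow_mat_char_poly[OF assms(1) cp, of 2] by simp
  also have "\<dots> \<le> real n * (real n - 1)"
  proof (rule symmetric_mat_trace_square_le[OF assms(1-3)])
    show "\<bar>M $$ (i, j)\<bar> \<le> 1" if "i < n" "j < n" "i \<noteq> j" for i j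
      using assms(4)[OF that] by auto
  qed
  finally have sq: "sum_list (map (\<lambda>r. r\<^sup>2) rs) \<le> real n * (real n - 1)" .
  have cnt: "m \<le> count_list rs e"
    using assms(6) unfolding cp order_prod_list_linear .
  then have "m \<le> n" using count_le_length[of rs e] len by linarith
  have "real m * real n * e\<^sup>2 \<le> (real n - real m) * sum_list (map (\<lambda>r. r\<^sup>2) rs)"
    using sum_list_eq_0_count_list_bound[OF sum0 assms(5) cnt] len by simp
  also have "\<dots> \<le> (real n - real m) * (real n * (real n - 1))"
    using sq \<open>m \<le> n\<close> by (intro mult_left_mono) simp_all
  finally have "real n * (real m * e\<^sup>2) \<le> real n * ((real n - 1) * (real n - real m))"
    by (simp add: algebra_simps)
  then have "real m * e\<^sup>2 \<le> (real n - 1) * (real n - real m)"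
    using assms(5) \<open>m \<le> n\<close> by simp
  then show ?thesis
    using assms(5) by (simp add: field_simps)
qed

end
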